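(* Let $T$ be a maximally strongly consistent $\mathcal{L}$-theory in $RGL^*$ and let $\varphi,\psi$ be $\mathcal{L}$-sentences with $T\vdash\varphi\vee\psi$. Then $T\vdash\varphi$ or $T\vdash\psi$.
   Context: $\mathcal{L}$ is a first-order language with countably many predicate, function and constant symbols. Formulas of $RGL^*$ are built from atomic formulas and the nullary connectives $\bar r$ ($r\in[0,1]\cap\mathbb{Q}$, including $\bar0,\bar1$) by $\wedge,\to,\forall,\exists$; $\neg\varphi:=\varphi\to\bar1$, $\varphi\vee\psi:=((\varphi\to\psi)\to\psi)\wedge((\psi\to\varphi)\to\varphi)$, $\varphi\leftrightarrow\psi:=(\varphi\to\psi)\wedge(\psi\to\varphi)$. Proof system $\vdash$: all instances of (G1) $(\varphi\to\psi)\to((\psi\to\chi)\to(\varphi\to\chi))$; (G2) $(\varphi\wedge\psi)\to\varphi$; (G3) $(\varphi\wedge\psi)\to(\psi\wedge\varphi)$; (G4) $\varphi\to(\varphi\wedge\varphi)$; (G5) $(\varphi\to(\psi\to\chi))\leftrightarrow((\varphi\wedge\psi)\to\chi)$; (G6) $((\varphi\to\psi)\to\chi)\to(((\psi\to\varphi)\to\chi)\to\chi)$; (G7) $\bar1\to\varphi$; (G$\forall$1) $(\forall x\,\varphi(x))\to\varphi(t)$; (G$\forall$2) $\forall x(\psi\to\varphi(x))\to(\psi\to\forall x\,\varphi(x))$; (G$\forall$3) $\forall x(\psi\vee\varphi(x))\to(\psi\vee\forall x\,\varphi(x))$; (G$\exists$1) $\varphi(t)\to\exists x\,\varphi(x)$;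 (G$\exists$2) $\exists x(\psi\to\varphi(x))\to(\psi\to\exists x\,\varphi(x))$ (with $t$ substitutable for $x$ and $x$ not free in $\psi$); (RGL1) $(\bar r\wedge\bar s)\leftrightarrow\overline{\max\{r,s\}}$; (RGL2) $\bar r\to\bar s$ if $r\ge s$, $(\bar r\to\bar s)\leftrightarrow\bar s$ if $r<s$; (RGL3) $\neg\neg\bar r$ for $r<1$. Rules: modus ponens and generalization. A theory $T$ is strongly consistent if $T\nvdash\bar r$ for every rational $r\in(0,1]$; it is maximally strongly consistent if it is strongly consistent and every strongly consistent $\mathcal{L}$-theory $\Sigma\supseteq T$ equals $T$. *)

theory Defs
  imports Complex_Main
begin

text \<open>Function symbols (constant symbols are the
nullary function symbols) and predicate symbols are given by a name (nat) and an
arity; a language is a pair of (countable) sets of such symbols.\<close>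

datatype trm = Var nat | Fn nat "trm list"

datatype fm =
    Atom nat "trm list"
  | Cst rat
  | And fm fm
  | Imp fm fm
  | All nat fm
  | Ex nat fm

record lang =
  preds :: "(nat \<times> nat) set"
  funs  :: "(nat \<times> nat) set"

fun trm_in :: "lang \<Rightarrow> trm \<Rightarrow> bool" where
  "trm_in L (Var x) = True"
| "trm_in L (Fn f ts) = ((f, length ts) \<in> funs L \<and> (\<forall>t\<in>set ts. trm_in L t))"

fun fm_in :: "lang \<Rightarrow> fm \<Rightarrow> bool" where
  "fm_in L (Atom p ts) = ((p, length ts) \<in> preds L \<and> (\<forall>t\<in>set ts. trm_in L t))"
| "fm_in L (Cst r) = (0 \<le> r \<and> r \<le> 1)"
| "fm_in L (And a b) = (fm_in L a \<and> fm_in L b)"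
| "fm_in L (Imp a b) = (fm_in L a \<and> fm_in L b)"
| "fm_in L (All x a) = fm_in L a"
| "fm_in L (Ex x a) = fm_in L a"

fun fvt :: "trm \<Rightarrow> nat set" where
  "fvt (Var x) = {x}"
| "fvt (Fn f ts) = (\<Union>t\<in>set ts. fvt t)"

fun fv :: "fm \<Rightarrow> nat set" where
  "fv (Atom p ts) = (\<Union>t\<in>set ts. fvt t)"
| "fv (Cst r) = {}"
| "fv (And a b) = fv a \<union> fv b"
| "fv (Imp a b) = fv a \<union> fv b"
| "fv (All x a) = fv a - {x}"
| "fv (Ex x a) = fv a - {x}"

definition sentence :: "lang \<Rightarrow> fm \<Rightarrow> bool" where
  "sentence L \<phi> \<longleftrightarrow> fm_in L \<phi> \<and> fv \<phi> = {}"

fun substt :: "nat \<Rightarrow> trm \<Rightarrow> trm \<Rightarrow> trm" where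
  "substt x t (Var y) = (if y = x then t else Var y)"
| "substt x t (Fn f ts) = Fn f (map (substt x t) ts)"

fun subst :: "nat \<Rightarrow> trm \<Rightarrow> fm \<Rightarrow> fm" where
  "subst x t (Atom p ts) = Atom p (map (substt x t) ts)"
| "subst x t (Cst r) = Cst r"
| "subst x t (And a b) = And (subst x t a) (subst x t b)"
| "subst x t (Imp a b) = Imp (subst x t a) (subst x t b)"
| "subst x t (All y a) = (if y = x then All y a else All y (subst x t a))"
| "subst x t (Ex y a) = (if y = x then Ex y a else Ex y (subst x t a))"

fun substitutable :: "nat \<Rightarrow> trm \<Rightarrow> fm \<Rightarrow> bool" where
  "substitutable x t (Atom p ts) = True"
| "substitutable x t (Cst r) = True"
| "substitutable x t (And a b) = (substitutable x t a \<and> substitutable x t b)"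
| "substitutable x t (Imp a b) = (substitutable x t a \<and> substitutable x t b)"
| "substitutable x t (All y a) =
     (x \<notin> fv (All y a) \<or> (y \<notin> fvt t \<and> substitutable x t a))"
| "substitutable x t (Ex y a) =
     (x \<notin> fv (Ex y a) \<or> (y \<notin> fvt t \<and> substitutable x t a))"

definition Neg :: "fm \<Rightarrow> fm" where
  "Neg \<phi> = Imp \<phi> (Cst 1)"

definition Or :: "fm \<Rightarrow> fm \<Rightarrow> fm" where
  "Or \<phi> \<psi> = And (Imp (Imp \<phi> \<psi>) \<psi>) (Imp (Imp \<psi> \<phi>) \<phi>)"

definition Iff :: "fm \<Rightarrow> fm \<Rightarrow> fm" where
  "Iff \<phi> \<psi> = And (Imp \<phi> \<psi>) (Imp \<psi> \<phi>)"

inductive axiom :: "fm \<Rightarrow> bool" where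
  G1: "axiom (Imp (Imp \<phi> \<psi>) (Imp (Imp \<psi> \<chi>) (Imp \<phi> \<chi>)))"
| G2: "axiom (Imp (And \<phi> \<psi>) \<phi>)"
| G3: "axiom (Imp (And \<phi> \<psi>) (And \<psi> \<phi>))"
| G4: "axiom (Imp \<phi> (And \<phi> \<phi>))"
| G5: "axiom (Iff (Imp \<phi> (Imp \<psi> \<chi>)) (Imp (And \<phi> \<psi>) \<chi>))"
| G6: "axiom (Imp (Imp (Imp \<phi> \<psi>) \<chi>) (Imp (Imp (Imp \<psi> \<phi>) \<chi>) \<chi>))"
| G7: "axiom (Imp (Cst 1) \<phi>)"
| GA1: "substitutable x t \<phi> \<Longrightarrow> axiom (Imp (All x \<phi>) (subst x t \<phi>))"
| GA2: "x \<notin> fv \<psi> \<Longrightarrow> axiom (Imp (All x (Imp \<psi> \<phi>)) (Imp \<psi> (All x \<phi>)))"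
| GA3: "x \<notin> fv \<psi> \<Longrightarrow> axiom (Imp (All x (Or \<psi> \<phi>)) (Or \<psi> (All x \<phi>)))"
| GE1: "substitutable x t \<phi> \<Longrightarrow> axiom (Imp (subst x t \<phi>) (Ex x \<phi>))"
| GE2: "x \<notin> fv \<psi> \<Longrightarrow> axiom (Imp (Ex x (Imp \<psi> \<phi>)) (Imp \<psi> (Ex x \<phi>)))"
| RGL1: "axiom (Iff (And (Cst r) (Cst s)) (Cst (max r s)))"
| RGL2a: "r \<ge> s \<Longrightarrow> axiom (Imp (Cst r) (Cst s))"
| RGL2b: "r < s \<Longrightarrow> axiom (Iff (Imp (Cst r) (Cst s)) (Cst s))"
| RGL3: "r < 1 \<Longrightarrow> axiom (Neg (Neg (Cst r)))"

text \<open>Provability of \<open>\<phi>\<close> from the theory \<open>T\<close> in the language \<open>L\<close>: axiom instances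
are restricted to \<open>L\<close>-formulas (in particular rational constants lie in [0,1]).\<close>
inductive prov :: "lang \<Rightarrow> fm set \<Rightarrow> fm \<Rightarrow> bool" where
  Ax: "axiom \<phi> \<Longrightarrow> fm_in L \<phi> \<Longrightarrow> prov L T \<phi>"
| Hyp: "\<phi> \<in> T \<Longrightarrow> prov L T \<phi>"
| MP: "prov L T \<phi> \<Longrightarrow> prov L T (Imp \<phi> \<psi>) \<Longrightarrow> prov L T \<psi>"
| Gen: "prov L T \<phi> \<Longrightarrow> prov L T (All x \<phi>)"

definition theory_of :: "lang \<Rightarrow> fm set \<Rightarrow> bool" where
  "theory_of L T \<longleftrightarrow> (\<forall>\<phi>\<in>T. sentence L \<phi>)"

definition strongly_consistent :: "lang \<Rightarrow> fm set \<Rightarrow> bool" where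
  "strongly_consistent L T \<longleftrightarrow> (\<forall>r::rat. 0 < r \<and> r \<le> 1 \<longrightarrow> \<not> prov L T (Cst r))"

definition max_strongly_consistent :: "lang \<Rightarrow> fm set \<Rightarrow> bool" where
  "max_strongly_consistent L T \<longleftrightarrow> strongly_consistent L T \<and>
     (\<forall>\<Sigma>. theory_of L \<Sigma> \<and> strongly_consistent L \<Sigma> \<and> T \<subseteq> \<Sigma> \<longrightarrow> \<Sigma> = T)"

end

theory Submission
  imports Defs
begin

text \<open>If neither disjunct were provable, maximality would make \<open>T \<union> {\<phi>}\<close> and \<open>T \<union> {\<psi>}\<close>
strongly inconsistent, and the deduction theorem (valid for sentences) would give
\<open>T \<turnstile> \<phi> \<rightarrow> r\<close> and \<open>T \<turnstile> \<psi> \<rightarrow> s\<close> for rationals \<open>r, s \<in> (0,1]\<close>, hence both with \<open>t = min r s\<close>.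
Since \<open>\<phi> \<or> \<psi>\<close> abbreviates \<open>((\<phi> \<rightarrow> \<psi>) \<rightarrow> \<psi>) \<and> ((\<psi> \<rightarrow> \<phi>) \<rightarrow> \<phi>)\<close>, both \<open>(\<phi> \<rightarrow> \<psi>) \<rightarrow> t\<close> and
\<open>(\<psi> \<rightarrow> \<phi>) \<rightarrow> t\<close> follow, and prelinearity (G6) yields \<open>T \<turnstile> t\<close>, contradicting strong
consistency.\<close>

lemma prov_fm_in: "prov L T \<phi> \<Longrightarrow> \<forall>\<chi>\<in>T. fm_in L \<chi> \<Longrightarrow> fm_in L \<phi>"
  by (induction rule: prov.induct) auto

lemma prov_andD1: "prov L T (And a b) \<Longrightarrow> fm_in L a \<Longrightarrow> fm_in L b \<Longrightarrow> prov L T a"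
  by (rule prov.MP, assumption, rule prov.Ax[OF axiom.G2], simp)

lemma prov_andD2: "prov L T (And a b) \<Longrightarrow> fm_in L a \<Longrightarrow> fm_in L b \<Longrightarrow> prov L T b"
  by (rule prov_andD1[where b = a], rule prov.MP, assumption)
    (rule prov.Ax[OF axiom.G3], simp_all)

lemma prov_imp_trans:
  assumes "prov L T (Imp a b)" "prov L T (Imp b c)" "fm_in L a" "fm_in L b" "fm_in L c"
  shows "prov L T (Imp a c)"
proof -
  have "prov L T (Imp (Imp a b) (Imp (Imp b c) (Imp a c)))"
    using assms(3-5) by (intro prov.Ax axiom.G1) simp
  then show ?thesis using assms(1,2) by (blast intro: prov.MP)
qed

lemma prov_exportation:
  assumes "prov L T (Imp (And a b) c)" "fm_in L a" "fm_in L b" "fm_in L c"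
  shows "prov L T (Imp a (Imp b c))"
proof -
  have "prov L T (Iff (Imp a (Imp b c)) (Imp (And a b) c))"
    using assms(2-4) by (intro prov.Ax axiom.G5) (simp add: Iff_def)
  from this[unfolded Iff_def] have "prov L T (Imp (Imp (And a b) c) (Imp a (Imp b c)))"
    by (rule prov_andD2) (use assms(2-4) in simp_all)
  then show ?thesis using assms(1) by (rule prov.MP[rotated])
qed

lemma prov_importation:
  assumes "prov L T (Imp a (Imp b c))" "fm_in L a" "fm_in L b" "fm_in L c"
  shows "prov L T (Imp (And a b) c)"
proof -
  have "prov L T (Iff (Imp a (Imp b c)) (Imp (And a b) c))"
    using assms(2-4) by (intro prov.Ax axiom.G5) (simp add: Iff_def)
  from this[unfolded Iff_def] have "prov L T (Imp (Imp a (Imp b c)) (Imp (And a b) c))"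
    by (rule prov_andD1) (use assms(2-4) in simp_all)
  then show ?thesis using assms(1) by (rule prov.MP[rotated])
qed

lemma prov_imp_weaken: "prov L T a \<Longrightarrow> fm_in L a \<Longrightarrow> fm_in L b \<Longrightarrow> prov L T (Imp b a)"
  by (rule prov.MP, assumption, rule prov_exportation[OF prov.Ax[OF axiom.G2]]) simp_all

lemma prov_imp_refl: "fm_in L a \<Longrightarrow> prov L T (Imp a a)"
  by (rule prov_imp_trans[OF prov.Ax[OF axiom.G4] prov.Ax[OF axiom.G2]]) simp_all

lemma prov_imp_contract:
  "prov L T (Imp a (Imp a b)) \<Longrightarrow> fm_in L a \<Longrightarrow> fm_in L b \<Longrightarrow> prov L T (Imp a b)"
  by (rule prov_imp_trans[OF prov.Ax[OF axiom.G4] prov_importation]) simp_all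

lemma prov_imp_mp:
  assumes "prov L T (Imp p a)" "prov L T (Imp p (Imp a b))" "fm_in L p" "fm_in L a" "fm_in L b"
  shows "prov L T (Imp p b)"
proof -
  have "prov L T (Imp (Imp p a) (Imp (Imp a b) (Imp p b)))"
    using assms(3-5) by (intro prov.Ax axiom.G1) simp
  with assms(1) have "prov L T (Imp (Imp a b) (Imp p b))" by (rule prov.MP)
  then have "prov L T (Imp p (Imp p b))"
    using prov_imp_trans[OF assms(2)] assms(3-5) by simp
  then show ?thesis using prov_imp_contract assms(3,5) by blast
qed

text \<open>The hypothesis must be a sentence: in the generalization case, axiom GA2 moves the
new quantifier past it only if the quantified variable is not free in it.\<close>
theorem prov_deduction:
  assumes "prov L (insert p T) c" "\<forall>\<chi>\<in>T. fm_in L \<chi>" "fm_in L p" "fv p = {}"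
  shows "prov L T (Imp p c)"
  using assms
proof (induction L "insert p T" c rule: prov.induct)
  case (Ax \<phi> L)
  then show ?case by (intro prov_imp_weaken prov.Ax) auto
next
  case (Hyp \<phi> L)
  show ?case
  proof (cases "\<phi> = p")
    case True
    then show ?thesis using Hyp.prems by (simp add: prov_imp_refl)
  next
    case False
    then show ?thesis using Hyp by (intro prov_imp_weaken prov.Hyp) auto
  qed
next
  case (MP L \<phi> \<psi>)
  have "fm_in L (Imp \<phi> \<psi>)"
    using prov_fm_in[OF MP.hyps(3)] MP.prems by auto
  then show ?case
    using prov_imp_mp[OF MP.hyps(2)[OF MP.prems] MP.hyps(4)[OF MP.prems]] MP.prems by simp
next
  case (Gen L \<phi> x)
  have "fm_in L \<phi>"
    using prov_fm_in[OF Gen.hyps(1)] Gen.prems by auto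
  then have "prov L T (Imp (All x (Imp p \<phi>)) (Imp p (All x \<phi>)))"
    using Gen.prems by (intro prov.Ax axiom.GA2) auto
  then show ?case
    using prov.Gen[OF Gen.hyps(2)[OF Gen.prems]] by (rule prov.MP[rotated])
qed

lemma prov_or_elim:
  assumes "prov L T (Or \<phi> \<psi>)" "prov L T (Imp \<phi> \<chi>)" "prov L T (Imp \<psi> \<chi>)"
    and "fm_in L \<phi>" "fm_in L \<psi>" "fm_in L \<chi>"
  shows "prov L T \<chi>"
proof -
  have "prov L T (Imp (Imp \<phi> \<psi>) \<psi>)" "prov L T (Imp (Imp \<psi> \<phi>) \<phi>)"
    using assms(1,4,5) by (auto simp: Or_def dest: prov_andD1 prov_andD2)
  then have "prov L T (Imp (Imp \<phi> \<psi>) \<chi>)" "prov L T (Imp (Imp \<psi> \<phi>) \<chi>)"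
    using assms(2-6) by (auto intro: prov_imp_trans)
  moreover have "prov L T (Imp (Imp (Imp \<phi> \<psi>) \<chi>) (Imp (Imp (Imp \<psi> \<phi>) \<chi>) \<chi>))"
    using assms(4-6) by (intro prov.Ax axiom.G6) simp
  ultimately show ?thesis by (blast intro: prov.MP)
qed

lemma prov_imp_Cst_mono:
  "prov L T (Imp \<phi> (Cst r)) \<Longrightarrow> s \<le> r \<Longrightarrow> 0 \<le> s \<Longrightarrow> r \<le> 1 \<Longrightarrow> fm_in L \<phi>
    \<Longrightarrow> prov L T (Imp \<phi> (Cst s))"
  by (erule prov_imp_trans, rule prov.Ax[OF axiom.RGL2a]) auto

lemma max_strongly_consistent_unprovable:
  assumes "theory_of L T" "max_strongly_consistent L T" "sentence L \<phi>" "\<not> prov L T \<phi>"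
  obtains r where "0 < r" "r \<le> 1" "prov L T (Imp \<phi> (Cst r))"
proof -
  have "theory_of L (insert \<phi> T)" using assms(1,3) by (auto simp: theory_of_def)
  moreover have "insert \<phi> T \<noteq> T" using assms(4) prov.Hyp by blast
  ultimately have "\<not> strongly_consistent L (insert \<phi> T)"
    using assms(2) unfolding max_strongly_consistent_def by blast
  then obtain r where r: "0 < r" "r \<le> 1" "prov L (insert \<phi> T) (Cst r)"
    unfolding strongly_consistent_def by blast
  moreover have "\<forall>\<chi>\<in>T. fm_in L \<chi>" using assms(1) by (auto simp: theory_of_def sentence_def)
  ultimately show ?thesis
    using that prov_deduction assms(3) by (auto simp: sentence_def)
qed

theorem mainTheorem9:
  fixes L :: lang and T :: "fm set" and \<phi> \<psi> :: fm
  assumes "theory_of L T"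
    and "max_strongly_consistent L T"
    and "sentence L \<phi>" and "sentence L \<psi>"
    and "prov L T (Or \<phi> \<psi>)"
  shows "prov L T \<phi> \<or> prov L T \<psi>"
proof (rule ccontr)
  assume "\<not> (prov L T \<phi> \<or> prov L T \<psi>)"
  then obtain r s where rs: "0 < r" "r \<le> 1" "prov L T (Imp \<phi> (Cst r))"
      "0 < s" "s \<le> 1" "prov L T (Imp \<psi> (Cst s))"
    using max_strongly_consistent_unprovable[OF assms(1,2)] assms(3,4) by metis
  define t where "t = min r s"
  have fm: "fm_in L \<phi>" "fm_in L \<psi>" "fm_in L (Cst t)"
    using assms(3,4) rs by (auto simp: sentence_def t_def)
  have "prov L T (Imp \<phi> (Cst t))" "prov L T (Imp \<psi> (Cst t))"
    using rs fm by (auto simp: t_def intro: prov_imp_Cst_mono)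
  then have "prov L T (Cst t)"
    using prov_or_elim[OF assms(5)] fm by blast
  moreover have "0 < t" "t \<le> 1" using rs by (auto simp: t_def)
  ultimately show False
    using assms(2) unfolding max_strongly_consistent_def strongly_consistent_def by blast
qed

end
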